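(* For integers $k\ge0$ and $q\ge2$, \[ \sum_{n=0}^\infty\frac{P_k(H_n,H_n^{(2)},\dots,H_n^{(k)})}{(n+1)(n+2)\cdots(n+q)}=\frac{1}{(q-1)!}\cdot\frac{1}{(q-1)^{k+1}}. \]
   Context: For integers $r\ge1$ and $n\ge0$, $H_n^{(r)}=\sum_{j=1}^n j^{-r}$ (so $H_0^{(r)}=0$) and $H_n=H_n^{(1)}$. $P_0=1$ and for $n\ge1$, $P_n(y_1,\dots,y_n)=\sum_{m_1+2m_2+\cdots=n}\frac{(-1)^{m_2+m_4+\cdots}}{m_1!m_2!\cdots}\prod_{i\ge1}(y_i/i)^{m_i}$ (sum over tuples of nonnegative integers), i.e. $P_n(p_1,\dots,p_n)=e_n$ expresses the elementary symmetric function via power sums. *)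

theory Defs
  imports Complex_Main
begin

definition gen_harm :: "nat \<Rightarrow> nat \<Rightarrow> real" where
  "gen_harm r n = (\<Sum>j=1..n. 1 / real j ^ r)"

text \<open>Index set for P_n: tuples (m_1, m_2, ...) of naturals, represented as functions
  nat => nat supported on {1..n}, with m_1 + 2 m_2 + ... = n.\<close>
definition P_tuples :: "nat \<Rightarrow> (nat \<Rightarrow> nat) set" where
  "P_tuples n = {m. (\<forall>i. m i \<noteq> 0 \<longrightarrow> i \<in> {1..n}) \<and> (\<Sum>i=1..n. i * m i) = n}"

definition P_poly :: "nat \<Rightarrow> (nat \<Rightarrow> real) \<Rightarrow> real" where
  "P_poly n y = (\<Sum>m\<in>P_tuples n.
      (-1) ^ (\<Sum>i\<in>{i\<in>{1..n}. even i}. m i) / (\<Prod>i=1..n. fact (m i))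
      * (\<Prod>i=1..n. (y i / real i) ^ m i))"

end

theory Submission
  imports Defs "HOL-Analysis.Summation_Tests"
begin

text \<open>
  Both sides are identified through the elementary symmetric functions
  \<open>e\<^sub>k(1, 1/2, \<dots>, 1/n)\<close>: since \<open>P\<^sub>k\<close> satisfies Newton's identities, \<open>P\<^sub>k\<close> applied to the power sums
  \<open>H\<^sub>n\<^sup>(\<^sup>r\<^sup>)\<close> is \<open>e\<^sub>k(1, \<dots>, 1/n)\<close>. Writing \<open>T\<^sub>k(n) = e\<^sub>k(n) / ((n+1)\<cdots>(n+p+1))\<close> with \<open>p = q - 1\<close>,
  the recurrence \<open>(n+1) e\<^sub>k(n+1) = (n+1) e\<^sub>k(n) + e\<^sub>k\<^sub>-\<^sub>1(n)\<close> gives the telescoping relation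
  \<open>p T\<^sub>k(n) = T\<^sub>k\<^sub>-\<^sub>1(n) + A\<^sub>k(n) - A\<^sub>k(n+1)\<close> with \<open>A\<^sub>k(n) = e\<^sub>k(n) / ((n+1)\<cdots>(n+p))\<close>. The boundary
  terms \<open>A\<^sub>k(n)\<close> tend to \<open>0\<close> because \<open>A\<^sub>k(n) = (n+p+1) T\<^sub>k(n)\<close> and \<open>\<Sum> T\<^sub>k\<close> converges, so
  \<open>\<Sum> T\<^sub>k = (A\<^sub>k(0) + \<Sum> T\<^sub>k\<^sub>-\<^sub>1) / p\<close>, and induction on \<open>k\<close> gives \<open>1 / (p! p\<^sup>k\<^sup>+\<^sup>1)\<close>.
\<close>

definition P_term :: "nat set \<Rightarrow> (nat \<Rightarrow> real) \<Rightarrow> (nat \<Rightarrow> nat) \<Rightarrow> real" where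
  "P_term S y m = (-1) ^ (\<Sum>i\<in>{i\<in>S. even i}. m i) / (\<Prod>i\<in>S. fact (m i))
     * (\<Prod>i\<in>S. (y i / real i) ^ m i)"

lemma P_poly_eq_sum_P_term: "P_poly n y = (\<Sum>m\<in>P_tuples n. P_term {1..n} y m)"
  unfolding P_poly_def P_term_def by simp

lemma P_term_superset:
  assumes "finite S'" "S \<subseteq> S'" "\<forall>i\<in>S' - S. m i = 0"
  shows "P_term S y m = P_term S' y m"
proof -
  have "(\<Sum>i\<in>{i\<in>S. even i}. m i) = (\<Sum>i\<in>{i\<in>S'. even i}. m i)"
    by (rule sum.mono_neutral_left) (use assms in force)+
  moreover have "(\<Prod>i\<in>S. fact (m i) :: real) = (\<Prod>i\<in>S'. fact (m i))"
    by (rule prod.mono_neutral_left) (use assms in auto)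
  moreover have "(\<Prod>i\<in>S. (y i / real i) ^ m i) = (\<Prod>i\<in>S'. (y i / real i) ^ m i)"
    by (rule prod.mono_neutral_left) (use assms in auto)
  ultimately show ?thesis
    unfolding P_term_def by simp
qed

lemma P_term_increment:
  assumes "finite S" "i \<in> S" "i \<ge> 1"
  shows "real i * real (Suc (m i)) * P_term S y (m(i := Suc (m i)))
           = (-1) ^ (i - 1) * y i * P_term S y m"
proof -
  let ?m = "m(i := Suc (m i))"
  have sign: "(\<Sum>j\<in>{j\<in>S. even j}. ?m j) = (\<Sum>j\<in>{j\<in>S. even j}. m j) + (if even i then 1 else 0)"
  proof -
    have "(\<Sum>j\<in>{j\<in>S. even j}. ?m j) = (\<Sum>j\<in>{j\<in>S. even j}. m j + (if j = i then 1 else 0))"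
      by (rule sum.cong) auto
    then show ?thesis
      using assms by (simp add: sum.distrib)
  qed
  have facts: "(\<Prod>j\<in>S. fact (?m j) :: real) = (\<Prod>j\<in>S. fact (m j)) * real (Suc (m i))"
    using assms by (simp add: prod.remove)
  have powers: "(\<Prod>j\<in>S. (y j / real j) ^ ?m j) = (\<Prod>j\<in>S. (y j / real j) ^ m j) * (y i / real i)"
    using assms by (simp add: prod.remove)
  define F where "F = (\<Prod>j\<in>S. fact (m j) :: real)"
  define Q where "Q = (\<Prod>j\<in>S. (y j / real j) ^ m j)"
  have "((-1::real) ^ (if even i then 1 else 0)) = (-1) ^ (i - 1)"
    using assms by (cases "even i") (auto elim!: evenE oddE)
  moreover have "F \<noteq> 0" "real i \<noteq> 0" "real (Suc (m i)) \<noteq> 0"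
    using assms unfolding F_def by auto
  ultimately show ?thesis
    unfolding P_term_def sign facts powers power_add F_def[symmetric] Q_def[symmetric]
    by (simp add: field_simps del: of_nat_Suc)
qed

lemma P_tuples_support: "m \<in> P_tuples k \<Longrightarrow> m j \<noteq> 0 \<Longrightarrow> j \<in> {1..k}"
  unfolding P_tuples_def by blast

lemma P_tuples_weight: "m \<in> P_tuples k \<Longrightarrow> (\<Sum>i=1..k. i * m i) = k"
  unfolding P_tuples_def by blast

lemma P_tuples_le:
  assumes "m \<in> P_tuples k"
  shows "m j \<le> k"
proof (cases "m j = 0")
  case False
  then have j: "j \<in> {1..k}"
    using P_tuples_support assms by blast
  have "m j \<le> j * m j"
    using j by simp
  also have "\<dots> \<le> (\<Sum>i=1..k. i * m i)"
    by (rule member_le_sum) (use j in auto)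
  finally show ?thesis
    using P_tuples_weight[OF assms] by simp
qed simp

lemma finite_P_tuples: "finite (P_tuples k)"
proof -
  have "P_tuples k \<subseteq> {f. \<forall>x. (x \<in> {0..k} \<longrightarrow> f x \<in> {0..k}) \<and> (x \<notin> {0..k} \<longrightarrow> f x = 0)}"
    using P_tuples_le P_tuples_support by fastforce
  then show ?thesis
    using finite_set_of_finite_funs[of "{0..k}" "{0..k}" 0] finite_subset by blast
qed

lemma sum_weight_fun_upd_Suc:
  assumes "j \<in> {1..k}"
  shows "(\<Sum>l=1..k. l * (m(j := Suc (m j))) l) = (\<Sum>l=1..k. l * m l) + j"
proof -
  have "(\<Sum>l=1..k. l * (m(j := Suc (m j))) l) = (\<Sum>l=1..k. l * m l + (if l = j then j else 0))"
    by (rule sum.cong) auto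
  then show ?thesis
    using assms by (simp add: sum.distrib)
qed

lemma P_tuples_increment:
  assumes i: "i \<in> {1..k}" and m: "m \<in> P_tuples (k - i)"
  shows "m(i := Suc (m i)) \<in> P_tuples k"
proof -
  have "(\<Sum>l=1..k. l * m l) = (\<Sum>l=1..k-i. l * m l)"
  proof (rule sum.mono_neutral_right)
    show "\<forall>l\<in>{1..k} - {1..k-i}. l * m l = 0"
      using P_tuples_support[OF m] by (metis Diff_iff mult_is_0)
  qed auto
  then have "(\<Sum>l=1..k. l * m l) = k - i"
    using P_tuples_weight[OF m] by simp
  moreover have "j \<in> {1..k}" if "(m(i := Suc (m i))) j \<noteq> 0" for j
    using that i P_tuples_support[OF m, of j] by (cases "j = i") auto
  ultimately show ?thesis
    using sum_weight_fun_upd_Suc[OF i] unfolding P_tuples_def by simp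
qed

lemma P_tuples_decrement:
  assumes i: "i \<in> {1..k}" and m: "m \<in> P_tuples k" and "m i \<noteq> 0"
  shows "m(i := m i - 1) \<in> P_tuples (k - i)"
proof -
  define m' where "m' = m(i := m i - 1)"
  have "m'(i := Suc (m' i)) = m"
    unfolding m'_def using \<open>m i \<noteq> 0\<close> by auto
  then have weight: "(\<Sum>l=1..k. l * m' l) + i = k"
    using sum_weight_fun_upd_Suc[OF i, of m'] P_tuples_weight[OF m] by simp
  have support: "j \<in> {1..k-i}" if "m' j \<noteq> 0" for j
  proof -
    have j: "j \<in> {1..k}"
      using that P_tuples_support[OF m] unfolding m'_def by (auto split: if_splits)
    have "j \<le> j * m' j"
      using that by simp
    also have "\<dots> \<le> (\<Sum>l=1..k. l * m' l)"
      by (rule member_le_sum) (use j in auto)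
    finally show ?thesis
      using weight j by auto
  qed
  have "(\<Sum>l=1..k-i. l * m' l) = (\<Sum>l=1..k. l * m' l)"
  proof (rule sum.mono_neutral_left)
    show "\<forall>l\<in>{1..k} - {1..k-i}. l * m' l = 0"
      using support by (metis Diff_iff mult_is_0)
  qed auto
  then show ?thesis
    using weight support unfolding m'_def[symmetric] P_tuples_def by auto
qed

lemma bij_betw_P_tuples_increment:
  assumes "i \<in> {1..k}"
  shows "bij_betw (\<lambda>m. m(i := Suc (m i))) (P_tuples (k - i)) {m \<in> P_tuples k. m i \<noteq> 0}"
proof (rule bij_betw_byWitness[where f' = "\<lambda>m. m(i := m i - 1)"])
  show "\<forall>m\<in>P_tuples (k - i). (m(i := Suc (m i)))(i := (m(i := Suc (m i))) i - 1) = m"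
    by auto
  show "\<forall>m\<in>{m \<in> P_tuples k. m i \<noteq> 0}. (m(i := m i - 1))(i := Suc ((m(i := m i - 1)) i)) = m"
    by auto
  show "(\<lambda>m. m(i := Suc (m i))) ` P_tuples (k - i) \<subseteq> {m \<in> P_tuples k. m i \<noteq> 0}"
    using P_tuples_increment[OF assms] by auto
  show "(\<lambda>m. m(i := m i - 1)) ` {m \<in> P_tuples k. m i \<noteq> 0} \<subseteq> P_tuples (k - i)"
    using P_tuples_decrement[OF assms] by auto
qed

lemma P_poly_newton_summand:
  assumes i: "i \<in> {1..k}"
  shows "(\<Sum>m\<in>P_tuples k. real (i * m i) * P_term {1..k} y m) = (-1) ^ (i - 1) * y i * P_poly (k - i) y"
proof -
  have "(\<Sum>m\<in>P_tuples k. real (i * m i) * P_term {1..k} y m)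
      = (\<Sum>m\<in>{m\<in>P_tuples k. m i \<noteq> 0}. real (i * m i) * P_term {1..k} y m)"
    by (rule sum.mono_neutral_right) (auto simp: finite_P_tuples)
  also have "\<dots> = (\<Sum>m\<in>P_tuples (k - i).
      real (i * Suc (m i)) * P_term {1..k} y (m(i := Suc (m i))))"
    using sum.reindex_bij_betw[OF bij_betw_P_tuples_increment[OF i],
        of "\<lambda>m. real (i * m i) * P_term {1..k} y m"] by simp
  also have "\<dots> = (\<Sum>m\<in>P_tuples (k - i). (-1) ^ (i - 1) * y i * P_term {1..k-i} y m)"
  proof (rule sum.cong[OF refl])
    fix m assume m: "m \<in> P_tuples (k - i)"
    have "P_term {1..k} y m = P_term {1..k-i} y m"
      by (rule P_term_superset[symmetric]) (use P_tuples_support[OF m] in fastforce)+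
    then show "real (i * Suc (m i)) * P_term {1..k} y (m(i := Suc (m i)))
        = (-1) ^ (i - 1) * y i * P_term {1..k-i} y m"
      using P_term_increment[of "{1..k}" i m y] i by (simp add: algebra_simps)
  qed
  also have "\<dots> = (-1) ^ (i - 1) * y i * P_poly (k - i) y"
    unfolding P_poly_eq_sum_P_term by (simp add: sum_distrib_left)
  finally show ?thesis .
qed

lemma P_poly_newton: "real k * P_poly k y = (\<Sum>i=1..k. (-1) ^ (i - 1) * y i * P_poly (k - i) y)"
proof -
  have "real k * P_poly k y = (\<Sum>m\<in>P_tuples k. real k * P_term {1..k} y m)"
    unfolding P_poly_eq_sum_P_term by (simp add: sum_distrib_left)
  also have "\<dots> = (\<Sum>m\<in>P_tuples k. \<Sum>i=1..k. real (i * m i) * P_term {1..k} y m)"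
  proof (rule sum.cong[OF refl])
    fix m assume "m \<in> P_tuples k"
    then have "real k = (\<Sum>i=1..k. real (i * m i))"
      by (metis P_tuples_weight of_nat_sum)
    then show "real k * P_term {1..k} y m = (\<Sum>i=1..k. real (i * m i) * P_term {1..k} y m)"
      by (simp add: sum_distrib_right)
  qed
  also have "\<dots> = (\<Sum>i=1..k. \<Sum>m\<in>P_tuples k. real (i * m i) * P_term {1..k} y m)"
    by (rule sum.swap)
  also have "\<dots> = (\<Sum>i=1..k. (-1) ^ (i - 1) * y i * P_poly (k - i) y)"
    by (intro sum.cong refl P_poly_newton_summand)
  finally show ?thesis .
qed

lemma P_poly_0: "P_poly 0 y = 1"
proof -
  have "P_tuples 0 = {\<lambda>_. 0}"
    unfolding P_tuples_def by auto
  then show ?thesis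
    unfolding P_poly_def by simp
qed

lemma P_poly_unique:
  assumes "G 0 = 1"
    and newton: "\<And>k. real k * G k = (\<Sum>i=1..k. (-1) ^ (i - 1) * y i * G (k - i))"
  shows "P_poly k y = G k"
proof (induction k rule: less_induct)
  case (less k)
  show ?case
  proof (cases "k = 0")
    case True
    then show ?thesis
      using assms(1) by (simp add: P_poly_0)
  next
    case False
    have "real k * P_poly k y = real k * G k"
      unfolding P_poly_newton newton[of k] using False by (intro sum.cong refl) (simp add: less)
    then show ?thesis
      using False by simp
  qed
qed

text \<open>\<open>esym k x n\<close> is \<open>e\<^sub>k(x 1, \<dots>, x n)\<close>; the value \<open>x 0\<close> is never used.\<close>

fun esym :: "nat \<Rightarrow> (nat \<Rightarrow> real) \<Rightarrow> nat \<Rightarrow> real" where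
  "esym 0 x n = 1"
| "esym (Suc k) x 0 = 0"
| "esym (Suc k) x (Suc n) = esym (Suc k) x n + x (Suc n) * esym k x n"

lemma esym_nonneg: "(\<And>j. x j \<ge> 0) \<Longrightarrow> esym k x n \<ge> 0"
  by (induction k x n rule: esym.induct) auto

lemma newton_add_variable:
  fixes G y :: "nat \<Rightarrow> real" and a :: real
  assumes newton: "\<And>k. real k * G k = (\<Sum>i=1..k. (-1) ^ (i - 1) * y i * G (k - i))"
  defines "R \<equiv> \<lambda>j. G j + (if j = 0 then 0 else a * G (j - 1))"
  shows "real k * R k = (\<Sum>i=1..k. (-1) ^ (i - 1) * (y i + a ^ i) * R (k - i))"
proof (cases k)
  case 0
  then show ?thesis by simp
next
  case (Suc m)
  define X where "X = (\<Sum>i=1..m. (-1) ^ (i - 1) * a ^ (i + 1) * G (m - i))"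
  have split: "(\<Sum>i=1..Suc m. (-1) ^ (i - 1) * (y i + a ^ i) * R (Suc m - i))
      = (\<Sum>i=1..Suc m. (-1) ^ (i - 1) * y i * G (Suc m - i))
      + (\<Sum>i=1..Suc m. (-1) ^ (i - 1) * a ^ i * G (Suc m - i))
      + (\<Sum>i=1..Suc m. (-1) ^ (i - 1) * (y i + a ^ i)
           * (if Suc m - i = 0 then 0 else a * G (Suc m - i - 1)))"
    unfolding R_def by (simp add: sum.distrib[symmetric] algebra_simps del: sum.cl_ivl_Suc)
  have powers: "(\<Sum>i=1..Suc m. (-1) ^ (i - 1) * a ^ i * G (Suc m - i)) = a * G m - X"
  proof -
    have "(\<Sum>i=Suc 1..Suc m. (-1) ^ (i - 1) * a ^ i * G (Suc m - i))
        = (\<Sum>i=1..m. (-1) ^ i * a ^ (i + 1) * G (m - i))"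
      by (subst sum.atLeast_Suc_atMost_Suc_shift) simp
    also have "\<dots> = - X"
      unfolding X_def sum_negf[symmetric] by (rule sum.cong) (auto simp: power_eq_if)
    finally show ?thesis
      by (subst sum.atLeast_Suc_atMost) auto
  qed
  have shifted: "(\<Sum>i=1..Suc m. (-1) ^ (i - 1) * (y i + a ^ i)
        * (if Suc m - i = 0 then 0 else a * G (Suc m - i - 1))) = a * (real m * G m) + X"
  proof -
    have "(\<Sum>i=1..Suc m. (-1) ^ (i - 1) * (y i + a ^ i)
          * (if Suc m - i = 0 then 0 else a * G (Suc m - i - 1)))
        = (\<Sum>i=1..m. (-1) ^ (i - 1) * (y i + a ^ i) * (a * G (m - i)))"
      by (simp add: Suc_diff_le)
    also have "\<dots> = a * (\<Sum>i=1..m. (-1) ^ (i - 1) * y i * G (m - i)) + X"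
      unfolding X_def
      by (simp add: sum_distrib_left sum.distrib[symmetric] algebra_simps del: sum.cl_ivl_Suc)
    finally show ?thesis
      using newton[of m] by simp
  qed
  show ?thesis
    unfolding Suc split powers shifted newton[of "Suc m", symmetric]
    unfolding R_def by (simp add: algebra_simps)
qed

lemma esym_newton:
  "real k * esym k x n = (\<Sum>i=1..k. (-1) ^ (i - 1) * (\<Sum>j=1..n. x j ^ i) * esym (k - i) x n)"
proof (induction n arbitrary: k)
  case 0
  then show ?case by (cases k) auto
next
  case (Suc n)
  have "esym j x (Suc n) = esym j x n + (if j = 0 then 0 else x (Suc n) * esym (j - 1) x n)" for j
    by (cases j) auto
  then show ?case
    using newton_add_variable[where G = "\<lambda>j. esym j x n" and a = "x (Suc n)", OF Suc.IH] by simp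
qed

lemma P_poly_power_sums: "P_poly k (\<lambda>i. \<Sum>j=1..n. x j ^ i) = esym k x n"
  by (rule P_poly_unique) (simp_all add: esym_newton)

lemma gen_harm_eq_power_sum: "gen_harm r n = (\<Sum>j=1..n. (1 / real j) ^ r)"
  unfolding gen_harm_def by (simp add: power_one_over)

lemma summable_weighted_limit_eq_0:
  fixes T :: "nat \<Rightarrow> real"
  assumes "summable T" and nonneg: "\<And>n. T n \<ge> 0" and c: "c > 0"
    and lim: "(\<lambda>n. T n * (real n + c)) \<longlonglongrightarrow> L"
  shows "L = 0"
proof (rule ccontr)
  assume "L \<noteq> 0"
  moreover have "L \<ge> 0"
    by (rule LIMSEQ_le_const[OF lim]) (use nonneg c in auto)
  ultimately have L: "L > 0" by simp
  have "eventually (\<lambda>n. T n * (real n + c) > L / 2) sequentially"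
    using order_tendstoD(1)[OF lim, of "L / 2"] L by simp
  then have "eventually (\<lambda>n. norm (1 / (real n + 1)) \<le> (2 * (1 + c) / L) * T n) sequentially"
  proof eventually_elim
    case (elim n)
    have "T n * (real n + c) \<le> T n * ((1 + c) * (real n + 1))"
      by (rule mult_left_mono) (use nonneg c in \<open>auto simp: algebra_simps\<close>)
    then show ?case
      using elim L by (simp add: field_simps)
  qed
  then have "summable (\<lambda>n. 1 / (real n + 1))"
    by (rule summable_comparison_test_ev) (intro summable_mult \<open>summable T\<close>)
  then have "summable (\<lambda>n. inverse (real (Suc n)))"
    by (simp add: inverse_eq_divide add.commute)
  then show False
    using summable_Suc_iff not_summable_harmonic by blast
qed

lemma sums_of_telescoping:
  fixes T B A :: "nat \<Rightarrow> real"
  assumes B: "B sums b" "\<And>n. B n \<ge> 0" and T: "\<And>n. T n \<ge> 0" and A: "\<And>n. A n \<ge> 0"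
    and "\<alpha> > 0" "c > 0"
    and telescope: "\<And>n. \<alpha> * T n = B n + A n - A (Suc n)"
    and A_eq: "\<And>n. A n = T n * (real n + c)"
  shows "T sums ((A 0 + b) / \<alpha>)"
proof -
  have partial: "\<alpha> * (\<Sum>n<N. T n) = (\<Sum>n<N. B n) + A 0 - A N" for N
    by (induction N) (auto simp: algebra_simps telescope)
  have "(\<Sum>n<N. T n) \<le> (b + A 0) / \<alpha>" for N
  proof -
    have "(\<Sum>n<N. B n) \<le> b"
      using sum_le_suminf[of B "{..<N}"] B sums_unique[OF B(1)] sums_summable by fastforce
    then show ?thesis
      using partial[of N] A[of N] \<open>\<alpha> > 0\<close> by (simp add: field_simps)
  qed
  then have "summable T"
    by (intro summableI_nonneg_bounded[OF T])
  then have sums: "T sums suminf T"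
    by (rule summable_sums)
  have "(\<lambda>N. (\<Sum>n<N. B n) + A 0 - \<alpha> * (\<Sum>n<N. T n)) \<longlonglongrightarrow> b + A 0 - \<alpha> * suminf T"
    using B(1) sums unfolding sums_def by (intro tendsto_intros)
  then have "(\<lambda>n. T n * (real n + c)) \<longlonglongrightarrow> b + A 0 - \<alpha> * suminf T"
    using partial A_eq by (simp add: algebra_simps)
  then have "b + A 0 - \<alpha> * suminf T = 0"
    using summable_weighted_limit_eq_0 \<open>summable T\<close> T \<open>c > 0\<close> by blast
  then show ?thesis
    using sums \<open>\<alpha> > 0\<close> by (simp add: field_simps)
qed

lemma prod_shift_eq_pochhammer: "(\<Prod>j=1..q. real (n + j)) = pochhammer (real n + 1) q"
  by (induction q) (simp_all add: pochhammer_Suc algebra_simps)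

lemma esym_harmonic_Suc:
  "real (Suc n) * esym k (\<lambda>j. 1 / real j) (Suc n)
     = real (Suc n) * esym k (\<lambda>j. 1 / real j) n + (if k = 0 then 0 else esym (k - 1) (\<lambda>j. 1 / real j) n)"
  by (cases k) (simp_all add: field_simps)

lemma esym_harmonic_telescope:
  defines "e \<equiv> \<lambda>k. esym k (\<lambda>j. 1 / real j)"
    and "Q \<equiv> \<lambda>r n. pochhammer (real n + 1) r"
  shows "real p * (e k n / Q (Suc p) n)
    = (if k = 0 then 0 else e (k - 1) n / Q (Suc p) n) + e k n / Q p n - e k (Suc n) / Q p (Suc n)"
proof -
  have Q_pos: "Q r m > 0" for r m
    unfolding Q_def by (simp add: pochhammer_pos add_pos_nonneg)
  define D where "D = Q (Suc p) n"
  define d where "d = (if k = 0 then 0 else e (k - 1) n)"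
  have "D = Q p n * (real n + 1 + real p)"
    unfolding D_def Q_def by (simp add: pochhammer_Suc)
  then have left: "e k n / Q p n = e k n * (real n + 1 + real p) / D"
    using Q_pos[of p n] by simp
  have "D = (real n + 1) * Q p (Suc n)"
    unfolding D_def Q_def by (simp add: pochhammer_rec add_ac)
  then have "e k (Suc n) / Q p (Suc n) = (real n + 1) * e k (Suc n) / D"
    by simp
  also have "(real n + 1) * e k (Suc n) = (real n + 1) * e k n + d"
    using esym_harmonic_Suc[of n k] unfolding e_def d_def by (simp add: add_ac)
  finally have right: "e k (Suc n) / Q p (Suc n) = ((real n + 1) * e k n + d) / D" .
  have "D > 0"
    unfolding D_def by (rule Q_pos)
  then show ?thesis
    unfolding D_def[symmetric] left right by (simp add: field_simps d_def)
qed

lemma esym_harmonic_series_recurrence: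
  defines "e \<equiv> \<lambda>k. esym k (\<lambda>j. 1 / real j)"
    and "Q \<equiv> \<lambda>r n. pochhammer (real n + 1) r"
  assumes "p \<ge> 1"
    and previous: "(\<lambda>n. if k = 0 then 0 else e (k - 1) n / Q (Suc p) n) sums b"
  shows "(\<lambda>n. e k n / Q (Suc p) n) sums ((e k 0 / Q p 0 + b) / real p)"
proof (rule sums_of_telescoping[where c = "real p + 1", OF previous])
  have Q_pos: "Q r n > 0" for r n
    unfolding Q_def by (simp add: pochhammer_pos add_pos_nonneg)
  have e_nonneg: "e j n \<ge> 0" for j n
    unfolding e_def by (rule esym_nonneg) simp
  show "0 \<le> (if k = 0 then 0 else e (k - 1) n / Q (Suc p) n)" for n
    using e_nonneg Q_pos by (simp add: less_imp_le)
  show "0 \<le> e k n / Q (Suc p) n" "0 \<le> e k n / Q p n" for n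
    using e_nonneg Q_pos by (simp_all add: less_imp_le)
  show "real p > 0" "real p + 1 > 0"
    using \<open>p \<ge> 1\<close> by simp_all
  show "real p * (e k n / Q (Suc p) n)
      = (if k = 0 then 0 else e (k - 1) n / Q (Suc p) n) + e k n / Q p n - e k (Suc n) / Q p (Suc n)" for n
    unfolding e_def Q_def by (rule esym_harmonic_telescope)
  show "e k n / Q p n = e k n / Q (Suc p) n * (real n + (real p + 1))" for n
    using Q_pos[of p n] unfolding Q_def by (simp add: pochhammer_Suc add_ac)
qed

lemma esym_harmonic_over_pochhammer_sums:
  assumes "p \<ge> 1"
  shows "(\<lambda>n. esym k (\<lambda>j. 1 / real j) n / pochhammer (real n + 1) (Suc p))
           sums (1 / fact p * (1 / real p ^ (k + 1)))"
proof (induction k)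
  case 0
  have "(\<lambda>n. if (0::nat) = 0 then 0 else esym (0 - 1) (\<lambda>j. 1 / real j) n
      / pochhammer (real n + 1) (Suc p)) sums 0"
    by simp
  from esym_harmonic_series_recurrence[OF assms this] show ?case
    by (simp add: pochhammer_fact)
next
  case (Suc k)
  have "(\<lambda>n. if Suc k = 0 then 0 else esym (Suc k - 1) (\<lambda>j. 1 / real j) n
      / pochhammer (real n + 1) (Suc p)) sums (1 / fact p * (1 / real p ^ (k + 1)))"
    using Suc.IH by simp
  from esym_harmonic_series_recurrence[OF assms this] show ?case
    by (simp add: field_simps)
qed

theorem theorem6:
  fixes k q :: nat
  assumes "q \<ge> 2"
  shows "(\<lambda>n. P_poly k (\<lambda>r. gen_harm r n) / (\<Prod>j=1..q. real (n + j)))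
           sums (1 / fact (q - 1) * (1 / real (q - 1) ^ (k + 1)))"
proof -
  obtain p where q: "q = Suc p" and "p \<ge> 1"
    using assms by (cases q) auto
  have "P_poly k (\<lambda>r. gen_harm r n) = esym k (\<lambda>j. 1 / real j) n" for n
    unfolding gen_harm_eq_power_sum by (rule P_poly_power_sums)
  then show ?thesis
    using esym_harmonic_over_pochhammer_sums[OF \<open>p \<ge> 1\<close>, of k]
    unfolding q prod_shift_eq_pochhammer by simp
qed

end
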